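(* Let $\Gamma$ be a $(d+1)$-vertex-connected graph with at least $d+1$ vertices, and let $(q,\Gamma)$ be a framework in $\mathbb{R}^d$ with the convex containment property. Then there is a non-symmetric equilibrium stress matrix $\Omega$ of $(q,\Gamma)$ such that for every non-exceptional vertex $i$ and every neighbor $j$ of $i$, $\Omega_{ij}>0$.
   Context: A framework $(q,\Gamma)$ in $\mathbb{R}^d$ has the convex containment property if (1) for each vertex, the positions of its neighbors have affine span of dimension $d$, and (2) there is a set of $d+1$ exceptional vertices such that every other (non-exceptional) vertex $i$ has $q(i)$ in the interior of the convex hull of the positions of its neighbors. A non-symmetric equilibrium stress matrix of $(q,\Gamma)$ is a real matrix $\Omega$ indexed by $V\times V$ with $\Omega(u,w)=0$ whenever $u\ne w$ and $\{u,w\}$ is not an edge, $\sum_w\Omega(u,w)=0$ for all $u$, and $\sum_w\Omega(u,w)q(w)=0$ for all $u$. *)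

theory Defs
  imports "HOL-Analysis.Analysis"
begin

definition simple_graph :: "'v set \<Rightarrow> ('v \<Rightarrow> 'v \<Rightarrow> bool) \<Rightarrow> bool" where
  "simple_graph V E \<longleftrightarrow> finite V \<and> (\<forall>u w. E u w \<longrightarrow> u \<in> V \<and> w \<in> V)
     \<and> (\<forall>u w. E u w \<longrightarrow> E w u) \<and> (\<forall>u. \<not> E u u)"

definition neighbors :: "'v set \<Rightarrow> ('v \<Rightarrow> 'v \<Rightarrow> bool) \<Rightarrow> 'v \<Rightarrow> 'v set" where
  "neighbors V E i = {j \<in> V. E i j}"

definition connected_on :: "('v \<Rightarrow> 'v \<Rightarrow> bool) \<Rightarrow> 'v set \<Rightarrow> bool" where
  "connected_on E W \<longleftrightarrow>
     (\<forall>u\<in>W. \<forall>w\<in>W. (\<lambda>x y. E x y \<and> x \<in> W \<and> y \<in> W)\<^sup>*\<^sup>* u w)"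

text \<open>k-vertex-connected: removing any set of fewer than k vertices leaves
  a connected graph (the vertex-count condition is stated separately).\<close>
definition vertex_connected :: "nat \<Rightarrow> 'v set \<Rightarrow> ('v \<Rightarrow> 'v \<Rightarrow> bool) \<Rightarrow> bool" where
  "vertex_connected k V E \<longleftrightarrow>
     (\<forall>S. S \<subseteq> V \<and> card S < k \<longrightarrow> connected_on E (V - S))"

definition convex_containment ::
  "'v set \<Rightarrow> ('v \<Rightarrow> 'v \<Rightarrow> bool) \<Rightarrow> ('v \<Rightarrow> 'a::euclidean_space) \<Rightarrow> 'v set \<Rightarrow> bool" where
  "convex_containment V E q X \<longleftrightarrow>
     (\<forall>i\<in>V. aff_dim (q ` neighbors V E i) = int DIM('a))
     \<and> X \<subseteq> V \<and> card X = DIM('a) + 1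
     \<and> (\<forall>i\<in>V - X. q i \<in> interior (convex hull (q ` neighbors V E i)))"

definition nonsym_equilibrium_stress ::
  "'v set \<Rightarrow> ('v \<Rightarrow> 'v \<Rightarrow> bool) \<Rightarrow> ('v \<Rightarrow> 'a::euclidean_space) \<Rightarrow> ('v \<Rightarrow> 'v \<Rightarrow> real) \<Rightarrow> bool" where
  "nonsym_equilibrium_stress V E q \<Omega> \<longleftrightarrow>
     (\<forall>u\<in>V. \<forall>w\<in>V. u \<noteq> w \<and> \<not> E u w \<longrightarrow> \<Omega> u w = 0)
     \<and> (\<forall>u\<in>V. (\<Sum>w\<in>V. \<Omega> u w) = 0)
     \<and> (\<forall>u\<in>V. (\<Sum>w\<in>V. \<Omega> u w *\<^sub>R q w) = 0)"

end

theory Submission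
  imports Defs
begin

text \<open>Each non-exceptional vertex lies in the interior of the convex hull of its
  neighbours, so it is a convex combination of them with strictly positive weights.
  Row i of the stress consists of these weights off the diagonal and -1 on the
  diagonal; exceptional rows are zero.\<close>

lemma rel_interior_convex_hull_image_positive_weights:
  fixes f :: "'i \<Rightarrow> 'a::euclidean_space"
  assumes "finite N" and "x \<in> rel_interior (convex hull (f ` N))"
  obtains w where "\<forall>j\<in>N. 0 < w j" and "sum w N = 1" and "(\<Sum>j\<in>N. w j *\<^sub>R f j) = x"
proof -
  have "f ` N = \<Union>((\<lambda>j. {f j}) ` N)" by blast
  then show ?thesis
    using assms rel_interior_convex_hull_union[of N "\<lambda>j. {f j}"] that by auto
qed

lemma sum_if_adjacent:
  assumes "finite V"
  shows "(\<Sum>w\<in>V. if E i w then f w else 0) = sum f (neighbors V E i)"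
  using assms by (simp add: neighbors_def sum.inter_filter)

definition barycentric_stress ::
  "'v set \<Rightarrow> ('v \<Rightarrow> 'v \<Rightarrow> bool) \<Rightarrow> ('v \<Rightarrow> 'v \<Rightarrow> real) \<Rightarrow> 'v \<Rightarrow> 'v \<Rightarrow> real" where
  "barycentric_stress F E W i j =
     (if i \<in> F then (if E i j then W i j else 0) - (if j = i then 1 else 0) else 0)"

lemma nonsym_equilibrium_stress_barycentric_stress:
  assumes "finite V" and "F \<subseteq> V"
    and W: "\<And>i. i \<in> F \<Longrightarrow>
      sum (W i) (neighbors V E i) = 1 \<and> (\<Sum>j\<in>neighbors V E i. W i j *\<^sub>R q j) = q i"
  shows "nonsym_equilibrium_stress V E q (barycentric_stress F E W)"
proof -
  let ?\<Omega> = "barycentric_stress F E W"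
  have row_sum: "(\<Sum>w\<in>V. ?\<Omega> u w) = 0"
    and row_moment: "(\<Sum>w\<in>V. ?\<Omega> u w *\<^sub>R q w) = 0" if u: "u \<in> F" for u
  proof -
    have "u \<in> V" using u assms(2) by blast
    have "(\<Sum>w\<in>V. ?\<Omega> u w) = sum (W u) (neighbors V E u) - 1"
      using u \<open>u \<in> V\<close> assms(1)
      by (simp add: barycentric_stress_def sum_subtractf sum_if_adjacent)
    then show "(\<Sum>w\<in>V. ?\<Omega> u w) = 0" using W[OF u] by simp
    have "(\<Sum>w\<in>V. ?\<Omega> u w *\<^sub>R q w)
        = (\<Sum>w\<in>V. if E u w then W u w *\<^sub>R q w else 0) - (\<Sum>w\<in>V. if w = u then q u else 0)"
      unfolding sum_subtractf[symmetric] using u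
      by (intro sum.cong) (auto simp: barycentric_stress_def scaleR_diff_left)
    also have "\<dots> = (\<Sum>j\<in>neighbors V E u. W u j *\<^sub>R q j) - q u"
      using \<open>u \<in> V\<close> assms(1) sum_if_adjacent[OF assms(1), of E u "\<lambda>j. W u j *\<^sub>R q j"] by simp
    finally show "(\<Sum>w\<in>V. ?\<Omega> u w *\<^sub>R q w) = 0" using W[OF u] by simp
  qed
  show ?thesis
    unfolding nonsym_equilibrium_stress_def
  proof (intro conjI ballI impI)
    fix u w assume "u \<noteq> w \<and> \<not> E u w"
    then show "?\<Omega> u w = 0" by (auto simp: barycentric_stress_def)
  next
    fix u
    show "(\<Sum>w\<in>V. ?\<Omega> u w) = 0"
      using row_sum[of u] by (cases "u \<in> F") (auto simp: barycentric_stress_def)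
    show "(\<Sum>w\<in>V. ?\<Omega> u w *\<^sub>R q w) = 0"
      using row_moment[of u] by (cases "u \<in> F") (auto simp: barycentric_stress_def)
  qed
qed

lemma barycentric_stress_pos:
  assumes "i \<in> F" and "E i j" and "\<not> E i i" and "W i j > 0"
  shows "barycentric_stress F E W i j > 0"
  using assms by (auto simp: barycentric_stress_def)

theorem lemma5p6:
  fixes V :: "'v set" and E :: "'v \<Rightarrow> 'v \<Rightarrow> bool"
    and q :: "'v \<Rightarrow> 'a::euclidean_space" and X :: "'v set"
  assumes "simple_graph V E"
    and "vertex_connected (DIM('a) + 1) V E"
    and "card V \<ge> DIM('a) + 1"
    and "convex_containment V E q X"
  shows "\<exists>\<Omega>. nonsym_equilibrium_stress V E q \<Omega> \<and>
           (\<forall>i\<in>V - X. \<forall>j. E i j \<longrightarrow> \<Omega> i j > 0)"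
proof -
  have finV: "finite V" and irrefl: "\<And>u. \<not> E u u"
    and adjacent_in_V: "\<And>u w. E u w \<Longrightarrow> w \<in> V"
    using assms(1) unfolding simple_graph_def by auto
  have "\<forall>i\<in>V - X. \<exists>w. (\<forall>j\<in>neighbors V E i. 0 < w j) \<and> sum w (neighbors V E i) = 1
      \<and> (\<Sum>j\<in>neighbors V E i. w j *\<^sub>R q j) = q i"
  proof
    fix i assume "i \<in> V - X"
    then have "q i \<in> rel_interior (convex hull (q ` neighbors V E i))"
      using assms(4) interior_subset_rel_interior unfolding convex_containment_def by blast
    moreover have "finite (neighbors V E i)"
      using finV by (simp add: neighbors_def)
    ultimately show "\<exists>w. (\<forall>j\<in>neighbors V E i. 0 < w j) \<and> sum w (neighbors V E i) = 1
      \<and> (\<Sum>j\<in>neighbors V E i. w j *\<^sub>R q j) = q i"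
      by (metis rel_interior_convex_hull_image_positive_weights)
  qed
  then obtain W where W: "\<forall>i\<in>V - X. (\<forall>j\<in>neighbors V E i. 0 < W i j)
      \<and> sum (W i) (neighbors V E i) = 1 \<and> (\<Sum>j\<in>neighbors V E i. W i j *\<^sub>R q j) = q i"
    by (rule bchoice[elim_format]) blast
  have "nonsym_equilibrium_stress V E q (barycentric_stress (V - X) E W)"
    using finV W by (intro nonsym_equilibrium_stress_barycentric_stress) auto
  moreover have "barycentric_stress (V - X) E W i j > 0" if "i \<in> V - X" and "E i j" for i j
    using that W irrefl adjacent_in_V by (intro barycentric_stress_pos) (auto simp: neighbors_def)
  ultimately show ?thesis by blast
qed

end
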